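(* Let $s=0$, $\lambda\in\mathbb{C}$ and $k\in\mathbb{Z}\setminus\{0\}$. Every odd superderivation of $\mathfrak{L}^0_\lambda$ of degree $k$ is inner; more precisely, it equals $\mathrm{ad}(aG_k+bH_k)$ for some $a,b\in\mathbb{C}$.
   Context: For $s\in\{0,\tfrac12\}$ and $\lambda\in\mathbb{C}$, $\mathfrak{L}^s_\lambda$ is the complex Lie superalgebra with basis $\{L_m,I_m,G_p,H_p : m\in\mathbb{Z},\ p\in s+\mathbb{Z}\}$, even part spanned by the $L_m,I_m$, odd part spanned by the $G_p,H_p$, and brackets $[L_m,L_n]=(m-n)L_{m+n}$, $[L_m,I_n]=(m-n)I_{m+n}$, $[L_m,H_p]=(\tfrac m2-p)H_{m+p}$, $[L_m,G_p]=(\tfrac m2-p)G_{m+p}+\lambda(m+1)H_{m+p}$, $[I_m,G_p]=(m-2p)H_{m+p}$, $[G_p,G_q]=I_{p+q}$, plus those given by super-antisymmetry $[y,x]=-(-1)^{|x||y|}[x,y]$; all other brackets of basis elements are zero. $\mathfrak{L}_r$ is spanned by basis elements of index $r$. A superderivation of parity $a$ is a linear map $D$ shifting parity by $a$ with $D([x,y])=[D(x),y]+(-1)^{a|x|}[x,D(y)]$ for homogeneous $x,y$; it has degree $r$ if $D(\mathfrak{L}_q)\subset\mathfrak{L}_{q+r}$. $\mathrm{ad}\,x(y)=[x,y]$. *)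

theory Defs
  imports Complex_Main
begin

text \<open>The Lie superalgebra L^0_lambda (s = 0, so all indices are integers).  Elements of the algebra are
  finitely supported coefficient functions on the basis.\<close>

datatype bas = L int | I int | G int | H int

type_synonym vec = "bas \<Rightarrow> complex"

definition fin :: "vec \<Rightarrow> bool" where
  "fin x \<longleftrightarrow> finite {b. x b \<noteq> 0}"

definition unit_vec :: "bas \<Rightarrow> vec" where
  "unit_vec b = (\<lambda>c. if c = b then 1 else 0)"

definition vadd :: "vec \<Rightarrow> vec \<Rightarrow> vec" where
  "vadd x y = (\<lambda>c. x c + y c)"

definition vscale :: "complex \<Rightarrow> vec \<Rightarrow> vec" where
  "vscale a x = (\<lambda>c. a * x c)"

fun odd_bas :: "bas \<Rightarrow> bool" where
  "odd_bas (L m) = False"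
| "odd_bas (I m) = False"
| "odd_bas (G p) = True"
| "odd_bas (H p) = True"

fun idx :: "bas \<Rightarrow> int" where
  "idx (L m) = m"
| "idx (I m) = m"
| "idx (G p) = p"
| "idx (H p) = p"

text \<open>Brackets of basis elements (including those given by super-antisymmetry).\<close>
fun br_bas :: "complex \<Rightarrow> bas \<Rightarrow> bas \<Rightarrow> vec" where
  "br_bas lam (L m) (L n) = vscale (of_int (m - n)) (unit_vec (L (m + n)))"
| "br_bas lam (L m) (I n) = vscale (of_int (m - n)) (unit_vec (I (m + n)))"
| "br_bas lam (I n) (L m) = vscale (- of_int (m - n)) (unit_vec (I (m + n)))"
| "br_bas lam (L m) (H p) = vscale (of_int m / 2 - of_int p) (unit_vec (H (m + p)))"
| "br_bas lam (H p) (L m) = vscale (- (of_int m / 2 - of_int p)) (unit_vec (H (m + p)))"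
| "br_bas lam (L m) (G p) = vadd (vscale (of_int m / 2 - of_int p) (unit_vec (G (m + p))))
                                 (vscale (lam * of_int (m + 1)) (unit_vec (H (m + p))))"
| "br_bas lam (G p) (L m) = vadd (vscale (- (of_int m / 2 - of_int p)) (unit_vec (G (m + p))))
                                 (vscale (- (lam * of_int (m + 1))) (unit_vec (H (m + p))))"
| "br_bas lam (I m) (G p) = vscale (of_int (m - 2 * p)) (unit_vec (H (m + p)))"
| "br_bas lam (G p) (I m) = vscale (- of_int (m - 2 * p)) (unit_vec (H (m + p)))"
| "br_bas lam (G p) (G q) = unit_vec (I (p + q))"
| "br_bas lam _ _ = (\<lambda>c. 0)"

definition brk :: "complex \<Rightarrow> vec \<Rightarrow> vec \<Rightarrow> vec" where
  "brk lam x y = (\<lambda>c. \<Sum>a\<in>{a. x a \<noteq> 0}. \<Sum>b\<in>{b. y b \<noteq> 0}. x a * y b * br_bas lam a b c)"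

definition even_hom :: "vec \<Rightarrow> bool" where
  "even_hom x \<longleftrightarrow> (\<forall>b. x b \<noteq> 0 \<longrightarrow> \<not> odd_bas b)"

definition odd_hom :: "vec \<Rightarrow> bool" where
  "odd_hom x \<longleftrightarrow> (\<forall>b. x b \<noteq> 0 \<longrightarrow> odd_bas b)"

definition odd_superder :: "complex \<Rightarrow> (vec \<Rightarrow> vec) \<Rightarrow> bool" where
  "odd_superder lam D \<longleftrightarrow>
     (\<forall>x. fin x \<longrightarrow> fin (D x)) \<and>
     (\<forall>x y. fin x \<longrightarrow> fin y \<longrightarrow> D (vadd x y) = vadd (D x) (D y)) \<and>
     (\<forall>a x. fin x \<longrightarrow> D (vscale a x) = vscale a (D x)) \<and>
     (\<forall>x. fin x \<longrightarrow> even_hom x \<longrightarrow> odd_hom (D x)) \<and>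
     (\<forall>x. fin x \<longrightarrow> odd_hom x \<longrightarrow> even_hom (D x)) \<and>
     (\<forall>x y. fin x \<longrightarrow> fin y \<longrightarrow> even_hom x \<longrightarrow> (even_hom y \<or> odd_hom y) \<longrightarrow>
          D (brk lam x y) = vadd (brk lam (D x) y) (brk lam x (D y))) \<and>
     (\<forall>x y. fin x \<longrightarrow> fin y \<longrightarrow> odd_hom x \<longrightarrow> (even_hom y \<or> odd_hom y) \<longrightarrow>
          D (brk lam x y) = vadd (brk lam (D x) y) (vscale (-1) (brk lam x (D y))))"

definition has_degree :: "(vec \<Rightarrow> vec) \<Rightarrow> int \<Rightarrow> bool" where
  "has_degree D r \<longleftrightarrow>
     (\<forall>q x. fin x \<longrightarrow> (\<forall>b. x b \<noteq> 0 \<longrightarrow> idx b = q) \<longrightarrow>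
            (\<forall>b. D x b \<noteq> 0 \<longrightarrow> idx b = q + r))"

end

theory Submission
  imports Defs
begin

text \<open>Since D(L_0) has degree k and is odd, it is a combination of G_k and H_k, and as k \<noteq> 0 there
  is an X = a G_k + b H_k with [X, L_0] = D(L_0). Both D and ad X are then odd derivations that
  agree on L_0, so for each basis element e of index n the vectors D(e) and [X, e] of index n + k
  solve the same equation -n w = T + [L_0, w]. On the index-m part, ad L_0 is -m times the identity
  plus the nilpotent map G_m \<mapsto> \<lambda> H_m, so for m = n + k \<noteq> n this equation has at most one
  solution. Hence D and ad X agree on the basis, and by linearity everywhere.\<close>

lemma brk_eq_sum:
  assumes "finite A" "finite B" "\<And>a. x a \<noteq> 0 \<Longrightarrow> a \<in> A" "\<And>b. y b \<noteq> 0 \<Longrightarrow> b \<in> B"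
  shows "brk lam x y c = (\<Sum>a\<in>A. \<Sum>b\<in>B. x a * y b * br_bas lam a b c)"
proof -
  have sA: "{a. x a \<noteq> 0} \<subseteq> A" and sB: "{b. y b \<noteq> 0} \<subseteq> B" using assms by auto
  have inner: "(\<Sum>b\<in>{b. y b \<noteq> 0}. x a * y b * br_bas lam a b c) =
      (\<Sum>b\<in>B. x a * y b * br_bas lam a b c)" for a
    by (rule sum.mono_neutral_left[OF assms(2) sB]) auto
  have "brk lam x y c = (\<Sum>a\<in>{a. x a \<noteq> 0}. \<Sum>b\<in>B. x a * y b * br_bas lam a b c)"
    unfolding brk_def inner ..
  also have "\<dots> = (\<Sum>a\<in>A. \<Sum>b\<in>B. x a * y b * br_bas lam a b c)"
    by (rule sum.mono_neutral_left[OF assms(1) sA]) auto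
  finally show ?thesis .
qed

lemma brk_unit_vec_left:
  assumes "finite B" "\<And>b. y b \<noteq> 0 \<Longrightarrow> b \<in> B"
  shows "brk lam (unit_vec a) y c = (\<Sum>b\<in>B. y b * br_bas lam a b c)"
proof -
  have "brk lam (unit_vec a) y c = (\<Sum>a'\<in>{a}. \<Sum>b\<in>B. unit_vec a a' * y b * br_bas lam a' b c)"
    by (rule brk_eq_sum) (auto simp: unit_vec_def assms split: if_split_asm)
  then show ?thesis by (simp add: unit_vec_def)
qed

lemma brk_unit_vec_right:
  assumes "finite A" "\<And>a. x a \<noteq> 0 \<Longrightarrow> a \<in> A"
  shows "brk lam x (unit_vec b) c = (\<Sum>a\<in>A. x a * br_bas lam a b c)"
proof -
  have "brk lam x (unit_vec b) c = (\<Sum>a\<in>A. \<Sum>b'\<in>{b}. x a * unit_vec b b' * br_bas lam a b' c)"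
    by (rule brk_eq_sum) (auto simp: unit_vec_def assms split: if_split_asm)
  then show ?thesis by (simp add: unit_vec_def)
qed

lemma brk_unit_vec: "brk lam (unit_vec a) (unit_vec b) = br_bas lam a b"
proof
  fix c
  have "brk lam (unit_vec a) (unit_vec b) c = (\<Sum>b'\<in>{b}. unit_vec b b' * br_bas lam a b' c)"
    by (rule brk_unit_vec_left) (auto simp: unit_vec_def split: if_split_asm)
  then show "brk lam (unit_vec a) (unit_vec b) c = br_bas lam a b c"
    by (simp add: unit_vec_def)
qed

lemma fin_unit_vec: "fin (unit_vec b)"
  unfolding fin_def unit_vec_def by simp

lemma fin_vscale: "fin x \<Longrightarrow> fin (vscale a x)"
  unfolding fin_def vscale_def by (rule finite_subset[of _ "{c. x c \<noteq> 0}"]) auto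

lemma brk_vadd_right:
  assumes "fin x" "fin y" "fin z"
  shows "brk lam x (vadd y z) = vadd (brk lam x y) (brk lam x z)"
proof
  fix c
  let ?A = "{a. x a \<noteq> 0}" and ?B = "{b. y b \<noteq> 0} \<union> {b. z b \<noteq> 0}"
  have fin: "finite ?A" "finite ?B" using assms unfolding fin_def by auto
  have "brk lam x (vadd y z) c = (\<Sum>a\<in>?A. \<Sum>b\<in>?B. x a * vadd y z b * br_bas lam a b c)"
    by (rule brk_eq_sum[OF fin]) (auto simp: vadd_def)
  also have "\<dots> = (\<Sum>a\<in>?A. \<Sum>b\<in>?B. x a * y b * br_bas lam a b c)
      + (\<Sum>a\<in>?A. \<Sum>b\<in>?B. x a * z b * br_bas lam a b c)"
    by (simp add: vadd_def sum.distrib[symmetric] algebra_simps)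
  also have "\<dots> = brk lam x y c + brk lam x z c"
    using brk_eq_sum[OF fin, of x y] brk_eq_sum[OF fin, of x z] by simp
  finally show "brk lam x (vadd y z) c = vadd (brk lam x y) (brk lam x z) c"
    by (simp add: vadd_def)
qed

lemma brk_vscale_right:
  assumes "fin x" "fin y"
  shows "brk lam x (vscale s y) = vscale s (brk lam x y)"
proof
  fix c
  let ?A = "{a. x a \<noteq> 0}" and ?B = "{b. y b \<noteq> 0}"
  have fin: "finite ?A" "finite ?B" using assms unfolding fin_def by auto
  have "brk lam x (vscale s y) c = (\<Sum>a\<in>?A. \<Sum>b\<in>?B. x a * vscale s y b * br_bas lam a b c)"
    by (rule brk_eq_sum[OF fin]) (auto simp: vscale_def)
  also have "\<dots> = s * (\<Sum>a\<in>?A. \<Sum>b\<in>?B. x a * y b * br_bas lam a b c)"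
    by (simp add: vscale_def sum_distrib_left algebra_simps)
  also have "\<dots> = s * brk lam x y c"
    using brk_eq_sum[OF fin, of x y] by simp
  finally show "brk lam x (vscale s y) c = vscale s (brk lam x y) c"
    by (simp add: vscale_def)
qed

lemma brk_zero_right:
  "brk lam x (\<lambda>_. 0) = (\<lambda>_. 0)"
  unfolding brk_def by simp

lemma fin_vec_induct [consumes 1, case_names zero add]:
  assumes "fin x"
    and "P (\<lambda>_. 0)"
    and "\<And>y b s. fin y \<Longrightarrow> P y \<Longrightarrow> P (vadd y (vscale s (unit_vec b)))"
  shows "P x"
proof -
  have "P (\<lambda>c. if c \<in> S then x c else 0)" if "finite S" for S
    using that
  proof (induction S rule: finite_induct)
    case empty
    then show ?case using assms(2) by simp
  next
    case (insert s S)
    let ?y = "\<lambda>c. if c \<in> S then x c else 0"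
    have "fin ?y"
      unfolding fin_def by (rule finite_subset[OF _ insert(1)]) auto
    then have "P (vadd ?y (vscale (x s) (unit_vec s)))"
      using insert(3) assms(3) by blast
    moreover have "vadd ?y (vscale (x s) (unit_vec s)) =
        (\<lambda>c. if c \<in> insert s S then x c else 0)"
      using insert(2) by (auto simp: vadd_def vscale_def unit_vec_def)
    ultimately show ?case by simp
  qed
  moreover have "x = (\<lambda>c. if c \<in> {c. x c \<noteq> 0} then x c else 0)"
    by auto
  ultimately show ?thesis
    using assms(1) unfolding fin_def by metis
qed

definition idx_hom :: "int \<Rightarrow> vec \<Rightarrow> bool" where
  "idx_hom m w \<longleftrightarrow> (\<forall>b. w b \<noteq> 0 \<longrightarrow> idx b = m)"

lemma has_degree_iff:
  "has_degree D r \<longleftrightarrow> (\<forall>q x. fin x \<longrightarrow> idx_hom q x \<longrightarrow> idx_hom (q + r) (D x))"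
  unfolding has_degree_def idx_hom_def ..

lemma idx_hom_unit_vec: "idx_hom (idx c) (unit_vec c)"
  by (simp add: idx_hom_def unit_vec_def)

lemma idx_hom_support:
  assumes "idx_hom m w" "w b \<noteq> 0" shows "b \<in> {L m, I m, G m, H m}"
  using assms unfolding idx_hom_def by (cases b) auto

lemma idx_hom_zero: "idx_hom m w \<Longrightarrow> idx b \<noteq> m \<Longrightarrow> w b = 0"
  unfolding idx_hom_def by blast

lemma brk_L0_idx_hom:
  assumes "idx_hom m w"
  shows "brk lam (unit_vec (L 0)) w =
    vadd (vscale (- of_int m) w) (vscale (lam * w (G m)) (unit_vec (H m)))"
proof
  fix c
  have "brk lam (unit_vec (L 0)) w c = (\<Sum>b\<in>{L m, I m, G m, H m}. w b * br_bas lam (L 0) b c)"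
    using idx_hom_support[OF assms] by (intro brk_unit_vec_left) auto
  also have "\<dots> = w (L m) * br_bas lam (L 0) (L m) c + w (I m) * br_bas lam (L 0) (I m) c
      + w (G m) * br_bas lam (L 0) (G m) c + w (H m) * br_bas lam (L 0) (H m) c"
    by (simp add: algebra_simps)
  finally show "brk lam (unit_vec (L 0)) w c =
      vadd (vscale (- of_int m) w) (vscale (lam * w (G m)) (unit_vec (H m))) c"
    using idx_hom_zero[OF assms, of c]
    by (cases c; cases "idx c = m") (simp_all add: vadd_def vscale_def unit_vec_def)
qed

lemma L0_weight_equation_unique:
  assumes hom: "idx_hom m w" "idx_hom m w'" and "m \<noteq> n"
    and eq: "vscale (- of_int n) w = vadd T (brk lam (unit_vec (L 0)) w)"
            "vscale (- of_int n) w' = vadd T (brk lam (unit_vec (L 0)) w')"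
  shows "w = w'"
proof -
  have mn: "(of_int m :: complex) - of_int n \<noteq> 0" using \<open>m \<noteq> n\<close> by simp
  have pointwise: "(of_int m - of_int n) * v c = T c + lam * v (G m) * unit_vec (H m) c"
    if "idx_hom m v" "vscale (- of_int n) v = vadd T (brk lam (unit_vec (L 0)) v)" for v c
    using fun_cong[OF that(2), of c] unfolding brk_L0_idx_hom[OF that(1)]
    by (simp add: vadd_def vscale_def algebra_simps)
  have "(of_int m - of_int n) * w (G m) = (of_int m - of_int n) * w' (G m)"
    using pointwise[OF hom(1) eq(1), of "G m"] pointwise[OF hom(2) eq(2), of "G m"]
    by (simp add: unit_vec_def)
  then have G: "w (G m) = w' (G m)" using mn by simp
  show ?thesis
  proof
    fix c
    have "(of_int m - of_int n) * w c = (of_int m - of_int n) * w' c"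
      using pointwise[OF hom(1) eq(1), of c] pointwise[OF hom(2) eq(2), of c] G by simp
    then show "w c = w' c" using mn by simp
  qed
qed

definition odd_elt :: "int \<Rightarrow> complex \<Rightarrow> complex \<Rightarrow> vec" where
  "odd_elt k a b = vadd (vscale a (unit_vec (G k))) (vscale b (unit_vec (H k)))"

lemma odd_elt_support: "odd_elt k a b d \<noteq> 0 \<Longrightarrow> d \<in> {G k, H k}"
  by (auto simp: odd_elt_def vadd_def vscale_def unit_vec_def split: if_split_asm)

lemma brk_odd_elt_unit_vec:
  "brk lam (odd_elt k a b) (unit_vec e) d = a * br_bas lam (G k) e d + b * br_bas lam (H k) e d"
  using brk_unit_vec_right[of "{G k, H k}" "odd_elt k a b" lam e d] odd_elt_support
  by (simp add: odd_elt_def vadd_def vscale_def unit_vec_def)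

lemma brk_odd_elt_L0:
  "brk lam (odd_elt k a b) (unit_vec (L 0)) = odd_elt k (of_int k * a) (of_int k * b - lam * a)"
  by (rule ext) (simp only: brk_odd_elt_unit_vec,
      simp add: odd_elt_def vadd_def vscale_def unit_vec_def algebra_simps)

lemma brk_odd_elt_L:
  "brk lam (odd_elt k a b) (unit_vec (L n)) =
     odd_elt (n + k) (a * (of_int k - of_int n / 2))
       (b * (of_int k - of_int n / 2) - a * lam * of_int (n + 1))"
  by (rule ext) (simp only: brk_odd_elt_unit_vec,
      simp add: odd_elt_def vadd_def vscale_def unit_vec_def algebra_simps)

lemma brk_odd_elt_I:
  "brk lam (odd_elt k a b) (unit_vec (I n)) = odd_elt (n + k) 0 (a * (2 * of_int k - of_int n))"
  by (rule ext) (simp only: brk_odd_elt_unit_vec,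
      simp add: odd_elt_def vadd_def vscale_def unit_vec_def algebra_simps)

lemma brk_odd_elt_G: "brk lam (odd_elt k a b) (unit_vec (G n)) = vscale a (unit_vec (I (n + k)))"
  by (rule ext) (simp only: brk_odd_elt_unit_vec, simp add: vscale_def unit_vec_def algebra_simps)

lemma brk_odd_elt_H: "brk lam (odd_elt k a b) (unit_vec (H n)) = (\<lambda>_. 0)"
  by (rule ext) (simp only: brk_odd_elt_unit_vec, simp)

lemma idx_hom_brk_odd_elt: "idx_hom (idx c + k) (brk lam (odd_elt k a b) (unit_vec c))"
  unfolding idx_hom_def brk_odd_elt_unit_vec
  by (cases c) (auto simp: vadd_def vscale_def unit_vec_def split: if_split_asm)

lemma brk_odd_elt_jacobi_L0:
  "vscale (- of_int (idx c)) (brk lam (odd_elt k a b) (unit_vec c)) =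
     vadd (brk lam (brk lam (odd_elt k a b) (unit_vec (L 0))) (unit_vec c))
          (brk lam (unit_vec (L 0)) (brk lam (odd_elt k a b) (unit_vec c)))"
  unfolding brk_odd_elt_L0 brk_L0_idx_hom[OF idx_hom_brk_odd_elt]
  by (cases c) (simp_all only: brk_odd_elt_L brk_odd_elt_I brk_odd_elt_G brk_odd_elt_H idx.simps,
      auto simp: fun_eq_iff odd_elt_def vadd_def vscale_def unit_vec_def field_simps)

lemma fin_odd_elt: "fin (odd_elt k a b)"
  unfolding fin_def using odd_elt_support by (blast intro: finite_subset[of _ "{G k, H k}"])

locale odd_superderivation =
  fixes lam :: complex and k :: int and D :: "vec \<Rightarrow> vec"
  assumes degree_nonzero: "k \<noteq> 0"
    and odd_superder: "odd_superder lam D"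
    and degree: "has_degree D k"
begin

lemma D_vadd: "fin x \<Longrightarrow> fin y \<Longrightarrow> D (vadd x y) = vadd (D x) (D y)"
  using odd_superder unfolding odd_superder_def by (elim conjE) simp

lemma D_vscale: "fin x \<Longrightarrow> D (vscale a x) = vscale a (D x)"
  using odd_superder unfolding odd_superder_def by (elim conjE) simp

lemma D_zero: "D (\<lambda>_. 0) = (\<lambda>_. 0)"
  using D_vscale[OF fin_unit_vec, of 0 "L 0"] by (simp add: vscale_def)

lemma odd_hom_D_even: "fin x \<Longrightarrow> even_hom x \<Longrightarrow> odd_hom (D x)"
  using odd_superder unfolding odd_superder_def by (elim conjE) simp

lemma D_leibniz_L0:
  "D (brk lam (unit_vec (L 0)) (unit_vec c)) =
     vadd (brk lam (D (unit_vec (L 0))) (unit_vec c)) (brk lam (unit_vec (L 0)) (D (unit_vec c)))"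
proof -
  have "even_hom (unit_vec (L 0))" "even_hom (unit_vec c) \<or> odd_hom (unit_vec c)"
    by (cases c; simp add: even_hom_def odd_hom_def unit_vec_def)+
  with odd_superder fin_unit_vec show ?thesis
    unfolding odd_superder_def by (elim conjE) (simp only: simp_thms)
qed

lemma idx_hom_D_unit_vec: "idx_hom (idx c + k) (D (unit_vec c))"
  using degree fin_unit_vec idx_hom_unit_vec unfolding has_degree_iff by blast

text \<open>The coefficients are chosen so that [inner_elt, L_0] = D(L_0), see brk_odd_elt_L0.\<close>

definition inner_elt :: vec where
  "inner_elt = odd_elt k (D (unit_vec (L 0)) (G k) / of_int k)
     ((D (unit_vec (L 0)) (H k) + lam * D (unit_vec (L 0)) (G k) / of_int k) / of_int k)"

lemma D_unit_vec_L0: "D (unit_vec (L 0)) = brk lam inner_elt (unit_vec (L 0))"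
proof -
  let ?w = "D (unit_vec (L 0))"
  have "odd_hom ?w"
    using odd_hom_D_even fin_unit_vec by (simp add: even_hom_def unit_vec_def)
  moreover have "idx_hom k ?w"
    using idx_hom_D_unit_vec[of "L 0"] by simp
  ultimately have "?w c \<noteq> 0 \<Longrightarrow> c \<in> {G k, H k}" for c
    unfolding odd_hom_def idx_hom_def by (cases c) auto
  then have "?w = odd_elt k (?w (G k)) (?w (H k))"
    by (auto simp: fun_eq_iff odd_elt_def vadd_def vscale_def unit_vec_def)
  then show ?thesis
    using degree_nonzero unfolding inner_elt_def brk_odd_elt_L0 by (simp add: field_simps)
qed

lemma D_unit_vec_eqI:
  assumes "D (brk lam (unit_vec (L 0)) (unit_vec c)) = vscale (- of_int (idx c)) (D (unit_vec c))"
  shows "D (unit_vec c) = brk lam inner_elt (unit_vec c)"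
proof (rule L0_weight_equation_unique)
  show "idx_hom (idx c + k) (D (unit_vec c))" by (rule idx_hom_D_unit_vec)
  show "idx_hom (idx c + k) (brk lam inner_elt (unit_vec c))"
    unfolding inner_elt_def by (rule idx_hom_brk_odd_elt)
  show "idx c + k \<noteq> idx c" using degree_nonzero by simp
  show "vscale (- of_int (idx c)) (D (unit_vec c)) =
      vadd (brk lam (brk lam inner_elt (unit_vec (L 0))) (unit_vec c))
        (brk lam (unit_vec (L 0)) (D (unit_vec c)))"
    using D_leibniz_L0 D_unit_vec_L0 assms by simp
  show "vscale (- of_int (idx c)) (brk lam inner_elt (unit_vec c)) =
      vadd (brk lam (brk lam inner_elt (unit_vec (L 0))) (unit_vec c))
        (brk lam (unit_vec (L 0)) (brk lam inner_elt (unit_vec c)))"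
    unfolding inner_elt_def by (rule brk_odd_elt_jacobi_L0)
qed

lemma D_unit_vec_H: "D (unit_vec (H n)) = (\<lambda>_. 0)"
proof -
  have "brk lam (unit_vec (L 0)) (unit_vec (H n)) = vscale (- of_int n) (unit_vec (H n))"
    by (simp add: brk_unit_vec)
  then have "D (unit_vec (H n)) = brk lam inner_elt (unit_vec (H n))"
    by (intro D_unit_vec_eqI) (simp add: D_vscale fin_unit_vec)
  then show ?thesis
    unfolding inner_elt_def brk_odd_elt_H .
qed

lemma D_bracket_L0:
  "D (brk lam (unit_vec (L 0)) (unit_vec c)) = vscale (- of_int (idx c)) (D (unit_vec c))"
proof (cases c)
  case (G n)
  \<comment> \<open>[L_0, G_n] = -n G_n + \<lambda> H_n, so here D(H_n) = 0 is needed\<close>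
  have "brk lam (unit_vec (L 0)) (unit_vec (G n)) =
      vadd (vscale (- of_int n) (unit_vec (G n))) (vscale lam (unit_vec (H n)))"
    by (simp add: brk_unit_vec)
  then show ?thesis
    using G
    by (simp only: D_vadd[OF fin_vscale fin_vscale] fin_unit_vec D_vscale D_unit_vec_H)
      (simp add: vadd_def vscale_def)
qed (simp_all add: brk_unit_vec D_vscale fin_unit_vec)

lemma D_unit_vec: "D (unit_vec c) = brk lam inner_elt (unit_vec c)"
  using D_unit_vec_eqI D_bracket_L0 by blast

lemma D_eq_brk_inner_elt: "fin x \<Longrightarrow> D x = brk lam inner_elt x"
proof (induction x rule: fin_vec_induct)
  case zero
  show ?case by (simp add: D_zero brk_zero_right)
next
  case (add y b s)
  have fin_inner: "fin inner_elt" unfolding inner_elt_def by (rule fin_odd_elt)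
  have "D (vadd y (vscale s (unit_vec b))) = vadd (D y) (vscale s (D (unit_vec b)))"
    using add.hyps by (simp add: D_vadd D_vscale fin_vscale fin_unit_vec)
  also have "\<dots> = vadd (brk lam inner_elt y) (vscale s (brk lam inner_elt (unit_vec b)))"
    using add.IH D_unit_vec by simp
  also have "\<dots> = brk lam inner_elt (vadd y (vscale s (unit_vec b)))"
    using add.hyps fin_inner
    by (simp add: brk_vadd_right brk_vscale_right fin_vscale fin_unit_vec)
  finally show ?case .
qed

end

theorem lemma2p4:
  fixes lam :: complex and k :: int and D :: "vec \<Rightarrow> vec"
  assumes "k \<noteq> 0"
    and "odd_superder lam D"
    and "has_degree D k"
  shows "\<exists>a b :: complex. \<forall>x. fin x \<longrightarrow>
           D x = brk lam (vadd (vscale a (unit_vec (G k))) (vscale b (unit_vec (H k)))) x"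
proof -
  interpret odd_superderivation lam k D
    using assms by unfold_locales
  show ?thesis
    using D_eq_brk_inner_elt unfolding inner_elt_def odd_elt_def by blast
qed

end
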